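(* Let $k\geq 1$ be an integer and let $G$ be a connected graph with $G=G_1\bigoplus_k G_2$ (a $k$-clique-sum of $G_1$ and $G_2$ along a vertex set $S'$ with $|S'|=k$). Then: (1) $G_i$ is connected for each $i\in\{1,2\}$; (2) for each $i\in\{1,2\}$ and every $S\subseteq V(G_i)$, $\omega(G_i-S)\leq \omega(G-S)$; (3) if $G_i\not\cong K_k$ for each $i\in\{1,2\}$, then $S'$ is a vertex-cut of $G$.
   Context: $\omega(H)$ denotes the number of components of a graph $H$. If $H$ is a simple graph with induced subgraphs $H_1,H_2$ and $S\subseteq V(H)$ such that $V(H)=V(H_1)\cup V(H_2)$, $E(H)=E(H_1)\cup E(H_2)$ and $S=V(H_1)\cap V(H_2)$, then $H$ is obtained by pasting $H_1$ and $H_2$ along $S$. A graph $G$ is a $k$-clique-sum of $G_1$ and $G_2$, written $G_1\bigoplus_k G_2$, if $G$ is obtained by pasting together two graphs $G_1'$ and $G_2'$ along a set $S'$ of order $k$, and for each $i\in\{1,2\}$, $G_i$ is obtained from $G_i'$ by extending $G_i'[S']$ to a clique of order $k$ (so $V(G_i)=V(G_i')\subseteq V(G)$). $S'$ is called the vertex set with respect to the clique-sum. A vertex-cut is a set of vertices whose removal increases the number of components. *)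

theory Defs
  imports Main
begin

record 'a sgraph =
  verts :: "'a set"
  edges :: "'a set set"

definition sgraph :: "('a, 'b) sgraph_scheme \<Rightarrow> bool" where
  "sgraph G \<longleftrightarrow> finite (verts G) \<and>
     (\<forall>e\<in>edges G. \<exists>u v. e = {u, v} \<and> u \<noteq> v \<and> u \<in> verts G \<and> v \<in> verts G)"

definition adj :: "'a sgraph \<Rightarrow> 'a \<Rightarrow> 'a \<Rightarrow> bool" where
  "adj G u v \<longleftrightarrow> {u, v} \<in> edges G"

definition reachable :: "'a sgraph \<Rightarrow> 'a \<Rightarrow> 'a \<Rightarrow> bool" where
  "reachable G u v \<longleftrightarrow> u \<in> verts G \<and> (adj G)\<^sup>*\<^sup>* u v"

definition components :: "'a sgraph \<Rightarrow> 'a set set" where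
  "components G = {{v \<in> verts G. reachable G u v} | u. u \<in> verts G}"

text \<open>\<open>\<omega>(H)\<close>: the number of components of H.\<close>
definition num_components :: "'a sgraph \<Rightarrow> nat" where
  "num_components G = card (components G)"

definition connected :: "'a sgraph \<Rightarrow> bool" where
  "connected G \<longleftrightarrow> verts G \<noteq> {} \<and> (\<forall>u\<in>verts G. \<forall>v\<in>verts G. reachable G u v)"

definition delete_verts :: "'a sgraph \<Rightarrow> 'a set \<Rightarrow> 'a sgraph" where
  "delete_verts G S = \<lparr>verts = verts G - S, edges = {e \<in> edges G. e \<inter> S = {}}\<rparr>"

definition induced_subgraph :: "'a sgraph \<Rightarrow> 'a sgraph \<Rightarrow> bool" where
  "induced_subgraph H G \<longleftrightarrow> verts H \<subseteq> verts G \<and> edges H = {e \<in> edges G. e \<subseteq> verts H}"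

definition pasting :: "'a sgraph \<Rightarrow> 'a sgraph \<Rightarrow> 'a sgraph \<Rightarrow> 'a set \<Rightarrow> bool" where
  "pasting H H1 H2 S \<longleftrightarrow> induced_subgraph H1 H \<and> induced_subgraph H2 H \<and>
     verts H = verts H1 \<union> verts H2 \<and> edges H = edges H1 \<union> edges H2 \<and> S = verts H1 \<inter> verts H2"

definition clique_edges :: "'a set \<Rightarrow> 'a set set" where
  "clique_edges S = {{u, v} | u v. u \<in> S \<and> v \<in> S \<and> u \<noteq> v}"

definition complete_on :: "'a sgraph \<Rightarrow> 'a set \<Rightarrow> 'a sgraph" where
  "complete_on H S = \<lparr>verts = verts H, edges = edges H \<union> clique_edges S\<rparr>"

definition clique_sum :: "nat \<Rightarrow> 'a sgraph \<Rightarrow> 'a sgraph \<Rightarrow> 'a sgraph \<Rightarrow> 'a set \<Rightarrow> bool" where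
  "clique_sum k G G1 G2 S' \<longleftrightarrow> card S' = k \<and>
     (\<exists>G1' G2'. pasting G G1' G2' S' \<and> G1 = complete_on G1' S' \<and> G2 = complete_on G2' S')"

definition vertex_cut :: "'a sgraph \<Rightarrow> 'a set \<Rightarrow> bool" where
  "vertex_cut G S \<longleftrightarrow> S \<subseteq> verts G \<and> num_components (delete_verts G S) > num_components G"

definition graph_iso :: "'a sgraph \<Rightarrow> 'b sgraph \<Rightarrow> bool" where
  "graph_iso G H \<longleftrightarrow> (\<exists>f. bij_betw f (verts G) (verts H) \<and>
     (\<forall>u\<in>verts G. \<forall>v\<in>verts G. {u, v} \<in> edges G \<longleftrightarrow> {f u, f v} \<in> edges H))"

definition complete_graph :: "nat \<Rightarrow> nat sgraph" where
  "complete_graph k = \<lparr>verts = {0..<k}, edges = clique_edges {0..<k}\<rparr>"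

end

theory Submission
  imports Defs
begin

text \<open>Gluing the clique onto S' cannot disconnect anything, and it can only merge components:
a walk in G - S is mapped into G1 - S by fixing the vertices of G1 and sending every other
vertex to a single surviving vertex s of S'. Since the other side meets G1 only in S', which
is a clique of G1, every edge goes to an edge or a loop. If S' is contained in S instead, a
walk in G - S starting in G1 cannot leave it, so the components of G1 - S are components of
G - S. Finally, if both sides have a vertex outside S', these two vertices lie in different
components of G - S', while G has only one.\<close>

lemma rtranclp_map:
  assumes "R\<^sup>*\<^sup>* x y" and "\<And>x y. R x y \<Longrightarrow> Q\<^sup>*\<^sup>* (f x) (f y)"
  shows "Q\<^sup>*\<^sup>* (f x) (f y)"
  using assms(1) by (induction rule: rtranclp_induct) (auto intro: rtranclp_trans assms(2))

lemma adj_commute: "adj H x y \<longleftrightarrow> adj H y x"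
  unfolding adj_def by (simp add: insert_commute)

lemma adj_in_verts:
  assumes "sgraph H" and "adj H x y"
  shows "x \<in> verts H" and "y \<in> verts H"
  using assms unfolding adj_def sgraph_def by (force simp: doubleton_eq_iff)+

lemma reachable_refl: "u \<in> verts H \<Longrightarrow> reachable H u u"
  unfolding reachable_def by simp

lemma reachable_trans: "reachable H u v \<Longrightarrow> reachable H v w \<Longrightarrow> reachable H u w"
  unfolding reachable_def by auto

lemma reachable_in_verts:
  assumes "sgraph H" and "reachable H u v"
  shows "v \<in> verts H"
proof -
  have "(adj H)\<^sup>*\<^sup>* u v" and "u \<in> verts H" using assms(2) unfolding reachable_def by auto
  then show ?thesis
    by (induction rule: rtranclp_induct) (use adj_in_verts(2)[OF assms(1)] in blast)+
qed

lemma reachable_sym: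
  assumes "sgraph H" and "reachable H u v"
  shows "reachable H v u"
proof -
  have "symp (adj H)" by (rule sympI) (simp add: adj_commute)
  then have "symp (adj H)\<^sup>*\<^sup>*" by (rule symp_rtranclp)
  then have "(adj H)\<^sup>*\<^sup>* v u" using assms(2) unfolding reachable_def by (blast dest: sympD)
  then show ?thesis using reachable_in_verts[OF assms] unfolding reachable_def by simp
qed

definition component_of :: "'a sgraph \<Rightarrow> 'a \<Rightarrow> 'a set" where
  "component_of H u = {v \<in> verts H. reachable H u v}"

lemma components_eq_image: "components H = component_of H ` verts H"
  unfolding components_def component_of_def by auto

lemma finite_components: "finite (verts H) \<Longrightarrow> finite (components H)"
  by (simp add: components_eq_image)

lemma component_of_self: "u \<in> verts H \<Longrightarrow> u \<in> component_of H u"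
  unfolding component_of_def by (simp add: reachable_refl)

lemma component_of_eq:
  assumes "sgraph H" and "reachable H u v"
  shows "component_of H u = component_of H v"
  using assms reachable_sym[OF assms] unfolding component_of_def by (blast intro: reachable_trans)

lemma num_components_connected: "connected H \<Longrightarrow> num_components H = 1"
proof -
  assume H: "connected H"
  then have "component_of H u = verts H" if "u \<in> verts H" for u
    using that unfolding connected_def component_of_def by auto
  then have "components H = {verts H}"
    using H unfolding connected_def components_eq_image by auto
  then show ?thesis unfolding num_components_def by simp
qed

lemma two_le_num_components:
  assumes "finite (verts H)" and "u \<in> verts H" and "v \<in> verts H" and "\<not> reachable H u v"
  shows "2 \<le> num_components H"
proof -
  have "v \<in> component_of H v" using assms(3) by (rule component_of_self)
  moreover have "v \<notin> component_of H u" using assms(4) unfolding component_of_def by simp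
  ultimately have "component_of H u \<noteq> component_of H v" by blast
  then have "2 = card {component_of H u, component_of H v}" by simp
  also have "\<dots> \<le> num_components H"
    unfolding num_components_def using assms(1-3) finite_components
    by (intro card_mono) (auto simp: components_eq_image)
  finally show ?thesis .
qed

lemma num_components_le_of_surj:
  assumes "sgraph H'" and "finite (verts H)" and "f ` verts H = verts H'"
    and "\<And>u v. reachable H u v \<Longrightarrow> reachable H' (f u) (f v)"
  shows "num_components H' \<le> num_components H"
proof -
  define h where "h C = component_of H' (f (SOME x. x \<in> C))" for C
  have h: "h (component_of H u) = component_of H' (f u)" if "u \<in> verts H" for u
  proof -
    have "(SOME x. x \<in> component_of H u) \<in> component_of H u"
      using component_of_self[OF that] by (rule someI)
    then have "reachable H' (f u) (f (SOME x. x \<in> component_of H u))"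
      using assms(4) unfolding component_of_def by blast
    then show ?thesis unfolding h_def using component_of_eq[OF assms(1)] by metis
  qed
  have "components H' = (\<lambda>u. component_of H' (f u)) ` verts H"
    unfolding components_eq_image assms(3)[symmetric] by (simp add: image_image)
  also have "\<dots> = h ` components H"
    unfolding components_eq_image by (auto simp: image_image h)
  finally show ?thesis
    unfolding num_components_def using assms(2) by (simp add: card_image_le finite_components)
qed

lemma num_components_le_of_restriction:
  assumes "finite (verts H')" and "verts H \<subseteq> verts H'"
    and "\<And>u v. u \<in> verts H \<Longrightarrow> v \<in> verts H \<Longrightarrow> reachable H u v \<longleftrightarrow> reachable H' u v"
  shows "num_components H \<le> num_components H'"
proof -
  have restrict: "component_of H u = component_of H' u \<inter> verts H" if "u \<in> verts H" for u
    using that assms(2,3) unfolding component_of_def by auto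
  have "components H \<subseteq> (\<lambda>C. C \<inter> verts H) ` components H'"
  proof
    fix C assume "C \<in> components H"
    then obtain u where "u \<in> verts H" and "C = component_of H u"
      unfolding components_eq_image by blast
    then show "C \<in> (\<lambda>C. C \<inter> verts H) ` components H'"
      using restrict assms(2) unfolding components_eq_image by blast
  qed
  then have "card (components H) \<le> card ((\<lambda>C. C \<inter> verts H) ` components H')"
    using finite_components[OF assms(1)] by (intro card_mono) simp_all
  also have "\<dots> \<le> card (components H')"
    using finite_components[OF assms(1)] by (rule card_image_le)
  finally show ?thesis unfolding num_components_def .
qed

lemma verts_delete_verts [simp]: "verts (delete_verts H S) = verts H - S"
  unfolding delete_verts_def by simp

lemma adj_delete_verts: "adj (delete_verts H S) x y \<longleftrightarrow> adj H x y \<and> x \<notin> S \<and> y \<notin> S"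
  unfolding adj_def delete_verts_def by auto

lemma delete_verts_empty [simp]: "delete_verts H {} = H"
  unfolding delete_verts_def by simp

lemma sgraph_delete_verts: "sgraph H \<Longrightarrow> sgraph (delete_verts H S)"
  unfolding sgraph_def delete_verts_def by fastforce

lemma doubleton_in_clique_edges:
  "u \<in> T \<Longrightarrow> v \<in> T \<Longrightarrow> {u, v} \<in> clique_edges T \<longleftrightarrow> u \<noteq> v"
  unfolding clique_edges_def by (auto simp: doubleton_eq_iff)

lemma clique_edges_subset: "e \<in> clique_edges T \<Longrightarrow> e \<subseteq> T"
  unfolding clique_edges_def by auto

lemma verts_complete_on [simp]: "verts (complete_on H T) = verts H"
  unfolding complete_on_def by simp

lemma adj_complete_on: "adj (complete_on H T) x y \<longleftrightarrow> adj H x y \<or> {x, y} \<in> clique_edges T"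
  unfolding adj_def complete_on_def by simp

lemma graph_iso_complete_graph:
  assumes "sgraph H" and "clique_edges (verts H) \<subseteq> edges H"
  shows "graph_iso H (complete_graph (card (verts H)))"
proof -
  obtain g where g: "bij_betw g (verts H) {0..<card (verts H)}"
    using assms(1) ex_bij_betw_finite_nat unfolding sgraph_def by blast
  have "{u, v} \<in> edges H \<longleftrightarrow> {g u, g v} \<in> clique_edges {0..<card (verts H)}"
    if "u \<in> verts H" and "v \<in> verts H" for u v
  proof -
    have "{u, v} \<in> edges H \<longleftrightarrow> u \<noteq> v"
      using assms that doubleton_in_clique_edges[OF that] unfolding sgraph_def
      by (auto simp: doubleton_eq_iff)
    moreover have "g u = g v \<longleftrightarrow> u = v"
      using g that unfolding bij_betw_def inj_on_def by blast
    ultimately show ?thesis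
      using doubleton_in_clique_edges bij_betwE[OF g] that by metis
  qed
  then show ?thesis
    unfolding graph_iso_def complete_graph_def using g by auto
qed

locale graph_pasting =
  fixes G A B :: "'a sgraph" and S' :: "'a set"
  assumes sgraph_G: "sgraph G" and pasting: "pasting G A B S'"
begin

lemma pasting_commute: "graph_pasting G B A S'"
  using sgraph_G pasting unfolding graph_pasting_def pasting_def by blast

lemma verts_G: "verts G = verts A \<union> verts B"
  using pasting unfolding pasting_def by simp

lemma separator_eq: "S' = verts A \<inter> verts B"
  using pasting unfolding pasting_def by simp

lemma edges_A_subset: "edges A \<subseteq> edges G"
  using pasting unfolding pasting_def induced_subgraph_def by blast

lemma adj_A_imp_adj_G: "adj A x y \<Longrightarrow> adj G x y"
  using edges_A_subset unfolding adj_def by blast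

lemma adj_A_iff: "x \<in> verts A \<Longrightarrow> y \<in> verts A \<Longrightarrow> adj A x y \<longleftrightarrow> adj G x y"
  using pasting unfolding pasting_def induced_subgraph_def adj_def by blast

lemma edges_G: "edges G = edges A \<union> edges B"
  using pasting unfolding pasting_def by simp

lemma edges_A_subset_verts: "e \<in> edges A \<Longrightarrow> e \<subseteq> verts A"
  using pasting unfolding pasting_def induced_subgraph_def by blast

lemma edges_B_subset_verts: "e \<in> edges B \<Longrightarrow> e \<subseteq> verts B"
  using pasting unfolding pasting_def induced_subgraph_def by blast

lemma adj_G_within_side: "adj G x y \<Longrightarrow> {x, y} \<subseteq> verts A \<or> {x, y} \<subseteq> verts B"
  unfolding adj_def edges_G using edges_A_subset_verts edges_B_subset_verts by blast

lemma sgraph_complete_on_A: "sgraph (complete_on A S')"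
  unfolding sgraph_def
proof (intro conjI ballI)
  show "finite (verts (complete_on A S'))"
    using sgraph_G verts_G unfolding sgraph_def by simp
next
  fix e assume "e \<in> edges (complete_on A S')"
  then consider "e \<in> edges A" | "e \<in> clique_edges S'"
    unfolding complete_on_def by auto
  then show "\<exists>u v. e = {u, v} \<and> u \<noteq> v \<and> u \<in> verts (complete_on A S') \<and> v \<in> verts (complete_on A S')"
  proof cases
    case 1
    then have "e \<subseteq> verts A" and "e \<in> edges G"
      using edges_A_subset_verts edges_A_subset by blast+
    moreover obtain u v where "e = {u, v}" and "u \<noteq> v"
      using \<open>e \<in> edges G\<close> sgraph_G unfolding sgraph_def by blast
    ultimately show ?thesis by auto
  next
    case 2
    then show ?thesis using separator_eq unfolding clique_edges_def by auto
  qed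
qed

lemma complete_on_A_iso_complete_graph:
  assumes "verts A = S'"
  shows "graph_iso (complete_on A S') (complete_graph (card S'))"
  using graph_iso_complete_graph[OF sgraph_complete_on_A] assms by (simp add: complete_on_def)

lemma reachable_projection:
  assumes s: "s \<in> S'" "s \<notin> S" and uv: "reachable (delete_verts G S) u v"
  shows "reachable (delete_verts (complete_on A S') S)
           (if u \<in> verts A then u else s) (if v \<in> verts A then v else s)"
proof -
  define p where "p x = (if x \<in> verts A then x else s)" for x
  let ?H = "delete_verts (complete_on A S') S"
  have p_B: "p x \<in> S'" if "x \<in> verts B" for x
    using that s separator_eq unfolding p_def by auto
  have p_not_S: "p x \<notin> S" if "x \<notin> S" for x
    using that s unfolding p_def by auto
  have step: "(adj ?H)\<^sup>*\<^sup>* (p x) (p y)" if xy: "adj (delete_verts G S) x y" for x y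
  proof -
    have e: "adj G x y" "x \<notin> S" "y \<notin> S" using xy unfolding adj_delete_verts by auto
    consider "{x, y} \<subseteq> verts A" | "{x, y} \<subseteq> verts B"
      using adj_G_within_side[OF e(1)] by blast
    then have "p x = p y \<or> adj ?H (p x) (p y)"
    proof cases
      case 1
      then show ?thesis
        using adj_A_iff e unfolding adj_delete_verts adj_complete_on p_def by simp
    next
      case 2
      then show ?thesis
        using p_B p_not_S e doubleton_in_clique_edges[of "p x" S' "p y"]
        unfolding adj_delete_verts adj_complete_on by auto
    qed
    then show ?thesis by auto
  qed
  have "(adj (delete_verts G S))\<^sup>*\<^sup>* u v" using uv unfolding reachable_def by simp
  then have "(adj ?H)\<^sup>*\<^sup>* (p u) (p v)" by (rule rtranclp_map[where f = p]) (rule step)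
  moreover have "p u \<in> verts ?H"
    using uv s separator_eq verts_G p_not_S unfolding reachable_def p_def by auto
  ultimately show ?thesis unfolding reachable_def p_def by simp
qed

lemma reachable_stays_in_A:
  assumes "S' \<subseteq> S" and "u \<in> verts A" and uv: "reachable (delete_verts G S) u v"
  shows "v \<in> verts A \<and> reachable (delete_verts (complete_on A S') S) u v"
proof -
  let ?H = "delete_verts (complete_on A S') S"
  have "(adj (delete_verts G S))\<^sup>*\<^sup>* u v" using uv unfolding reachable_def by simp
  then have "v \<in> verts A \<and> (adj ?H)\<^sup>*\<^sup>* u v"
  proof (induction rule: rtranclp_induct)
    case base
    then show ?case using assms(2) by simp
  next
    case (step v w)
    then have e: "adj G v w" "v \<notin> S" "w \<notin> S" "v \<in> verts A"
      unfolding adj_delete_verts by auto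
    then have "{v, w} \<subseteq> verts A"
      using adj_G_within_side separator_eq assms(1) by blast
    then have "adj ?H v w"
      using adj_A_iff e unfolding adj_delete_verts adj_complete_on by simp
    then show ?case using step \<open>{v, w} \<subseteq> verts A\<close> by auto
  qed
  then show ?thesis using uv assms(2) unfolding reachable_def by auto
qed

lemma connected_complete_on_A:
  assumes "connected G" and "S' \<noteq> {}"
  shows "connected (complete_on A S')"
proof -
  obtain s where "s \<in> S'" using assms(2) by blast
  have "reachable (complete_on A S') u v" if "u \<in> verts A" and "v \<in> verts A" for u v
  proof -
    have "reachable (delete_verts G {}) u v"
      using assms(1) that verts_G unfolding connected_def by auto
    from reachable_projection[OF \<open>s \<in> S'\<close> _ this] show ?thesis using that by simp
  qed
  then show ?thesis
    using assms(2) separator_eq unfolding connected_def by auto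
qed

lemma num_components_complete_on_A_le:
  "num_components (delete_verts (complete_on A S') S) \<le> num_components (delete_verts G S)"
proof (cases "S' \<subseteq> S")
  case True
  show ?thesis
  proof (rule num_components_le_of_restriction)
    show "finite (verts (delete_verts G S))" using sgraph_G unfolding sgraph_def by simp
    show "verts (delete_verts (complete_on A S') S) \<subseteq> verts (delete_verts G S)"
      using verts_G by auto
    fix u v assume u: "u \<in> verts (delete_verts (complete_on A S') S)"
      and v: "v \<in> verts (delete_verts (complete_on A S') S)"
    have "adj (delete_verts G S) x y" if "adj (delete_verts (complete_on A S') S) x y" for x y
      using that True adj_A_imp_adj_G clique_edges_subset[of "{x, y}" S']
      unfolding adj_delete_verts adj_complete_on by blast
    then have "reachable (delete_verts (complete_on A S') S) u v \<Longrightarrow>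
        reachable (delete_verts G S) u v"
      using u verts_G unfolding reachable_def by (auto intro: mono_rtranclp[rule_format])
    then show "reachable (delete_verts (complete_on A S') S) u v \<longleftrightarrow>
        reachable (delete_verts G S) u v"
      using reachable_stays_in_A[OF True] u by auto
  qed
next
  case False
  then obtain s where s: "s \<in> S'" "s \<notin> S" by blast
  show ?thesis
  proof (rule num_components_le_of_surj)
    show "sgraph (delete_verts (complete_on A S') S)"
      using sgraph_complete_on_A by (rule sgraph_delete_verts)
    show "finite (verts (delete_verts G S))" using sgraph_G unfolding sgraph_def by simp
    show "(\<lambda>x. if x \<in> verts A then x else s) ` verts (delete_verts G S)
        = verts (delete_verts (complete_on A S') S)"
      using s separator_eq verts_G by (auto simp: image_iff)
  qed (rule reachable_projection[OF s])
qed

lemma vertex_cut_separator: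
  assumes "connected G" and "a \<in> verts A - S'" and "b \<in> verts B - S'"
  shows "vertex_cut G S'"
proof -
  have "\<not> reachable (delete_verts G S') a b"
    using reachable_stays_in_A[of S' a b] assms(2,3) separator_eq by auto
  then have "2 \<le> num_components (delete_verts G S')"
    using two_le_num_components[of "delete_verts G S'" a b] assms(2,3) sgraph_G verts_G
    unfolding sgraph_def by auto
  then show ?thesis
    unfolding vertex_cut_def using num_components_connected[OF assms(1)] separator_eq verts_G
    by auto
qed

end

theorem lemma2p1:
  fixes G G1 G2 :: "'a sgraph" and S' :: "'a set" and k :: nat
  assumes "k \<ge> 1"
    and "sgraph G"
    and "connected G"
    and "clique_sum k G G1 G2 S'"
  shows "(connected G1 \<and> connected G2)
    \<and> (\<forall>S \<subseteq> verts G1. num_components (delete_verts G1 S) \<le> num_components (delete_verts G S))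
    \<and> (\<forall>S \<subseteq> verts G2. num_components (delete_verts G2 S) \<le> num_components (delete_verts G S))
    \<and> (\<not> graph_iso G1 (complete_graph k) \<and> \<not> graph_iso G2 (complete_graph k)
           \<longrightarrow> vertex_cut G S')"
proof -
  obtain A B where AB: "pasting G A B S'" and G1: "G1 = complete_on A S'"
    and G2: "G2 = complete_on B S'" and k: "card S' = k"
    using assms(4) unfolding clique_sum_def by blast
  interpret AB: graph_pasting G A B S' using assms(2) AB by unfold_locales
  interpret BA: graph_pasting G B A S' by (rule AB.pasting_commute)
  have "S' \<noteq> {}" using k assms(1) by auto
  have "vertex_cut G S'"
    if "\<not> graph_iso G1 (complete_graph k)" and "\<not> graph_iso G2 (complete_graph k)"
  proof -
    have "verts A \<noteq> S'" and "verts B \<noteq> S'"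
      using that AB.complete_on_A_iso_complete_graph BA.complete_on_A_iso_complete_graph G1 G2 k
      by auto
    then show ?thesis
      using AB.vertex_cut_separator[OF assms(3)] AB.separator_eq by blast
  qed
  then show ?thesis
    using AB.connected_complete_on_A BA.connected_complete_on_A assms(3) \<open>S' \<noteq> {}\<close>
      AB.num_components_complete_on_A_le BA.num_components_complete_on_A_le G1 G2 by blast
qed

end
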